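(* For every metric compactum $X$ and every field $G$ we have $d_GX\leq\dim_GX$.
   Context: All spaces are metric compacta. $H_k(\cdot;G)$ denotes reduced Čech homology with coefficients in $G$ and $H^k(\cdot;G)$ reduced Čech cohomology. For closed sets $A\subset K$, $i^k_{A,K}:H_k(A;G)\to H_k(K;G)$ is the homomorphism induced by inclusion. $\mathcal H_{X,G}$ is the set of all integers $k\ge 1$ such that there exist a closed set $F\subset X$ and a nontrivial element $\gamma\in H_{k-1}(F;G)$ with $i^{k-1}_{F,X}(\gamma)=0$; the homological dimension is $d_GX=\max\mathcal H_{X,G}$ (Alexandroff). The cohomological dimension $\dim_GX$ is the largest integer $n$ such that $H^n(X,A;G)\neq 0$ for some closed $A\subset X$. *)

theory Defs
  imports "HOL-Analysis.Analysis"
begin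

definition open_cover :: "'a::topological_space set \<Rightarrow> 'a set set \<Rightarrow> bool" where
  "open_cover S \<U> \<longleftrightarrow> finite \<U> \<and> (\<forall>U\<in>\<U>. openin (top_of_set S) U) \<and> \<Union>\<U> = S"

definition nerve_simp :: "'a set set \<Rightarrow> nat \<Rightarrow> 'a set list set" where
  "nerve_simp \<U> k = {\<sigma>. length \<sigma> = Suc k \<and> set \<sigma> \<subseteq> \<U> \<and> \<Inter>(set \<sigma>) \<noteq> {}}"

definition del_nth :: "nat \<Rightarrow> 'b list \<Rightarrow> 'b list" where
  "del_nth i xs = take i xs @ drop (Suc i) xs"

definition chains :: "'a set set \<Rightarrow> nat \<Rightarrow> ('a set list \<Rightarrow> 'g::field) set" where
  "chains \<U> k = {c. finite {\<sigma>. c \<sigma> \<noteq> 0} \<and> (\<forall>\<sigma>. c \<sigma> \<noteq> 0 \<longrightarrow> \<sigma> \<in> nerve_simp \<U> k)}"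

definition bd :: "('a set list \<Rightarrow> 'g::field) \<Rightarrow> 'a set list \<Rightarrow> 'g" where
  "bd c \<tau> = (\<Sum>\<sigma>\<in>{\<sigma>. c \<sigma> \<noteq> 0}. \<Sum>i<length \<sigma>.
              if del_nth i \<sigma> = \<tau> then (-1) ^ i * c \<sigma> else 0)"

definition aug :: "('a set list \<Rightarrow> 'g::field) \<Rightarrow> 'g" where
  "aug c = (\<Sum>\<sigma>\<in>{\<sigma>. c \<sigma> \<noteq> 0}. c \<sigma>)"

text \<open>Reduced cycles (augmented complex in degree 0) and boundaries.\<close>
definition cycles :: "'a set set \<Rightarrow> nat \<Rightarrow> ('a set list \<Rightarrow> 'g::field) set" where
  "cycles \<U> k = {c \<in> chains \<U> k. if k = 0 then aug c = 0 else bd c = (\<lambda>_. 0)}"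

definition boundaries :: "'a set set \<Rightarrow> nat \<Rightarrow> ('a set list \<Rightarrow> 'g::field) set" where
  "boundaries \<U> k = bd ` chains \<U> (Suc k)"

definition hclass :: "'a set set \<Rightarrow> nat \<Rightarrow> ('a set list \<Rightarrow> 'g::field) \<Rightarrow> ('a set list \<Rightarrow> 'g) set" where
  "hclass \<U> k c = {(\<lambda>\<sigma>. c \<sigma> + b \<sigma>) | b. b \<in> boundaries \<U> k}"

definition nerve_homology :: "'a set set \<Rightarrow> nat \<Rightarrow> ('a set list \<Rightarrow> 'g::field) set set" where
  "nerve_homology \<U> k = hclass \<U> k ` cycles \<U> k"

definition is_proj :: "'a set set \<Rightarrow> 'a set set \<Rightarrow> ('a set \<Rightarrow> 'a set) \<Rightarrow> bool" where
  "is_proj \<V> \<U> p \<longleftrightarrow> (\<forall>V\<in>\<V>. p V \<in> \<U> \<and> V \<subseteq> p V)"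

definition push :: "('a set \<Rightarrow> 'a set) \<Rightarrow> ('a set list \<Rightarrow> 'g::field) \<Rightarrow> 'a set list \<Rightarrow> 'g" where
  "push p c \<tau> = (\<Sum>\<sigma>\<in>{\<sigma>. c \<sigma> \<noteq> 0}. if map p \<sigma> = \<tau> then c \<sigma> else 0)"

text \<open>Reduced Cech homology H_k(S;G): the inverse limit over finite open covers,
  represented as compatible families of homology classes.\<close>
definition cech_homology :: "'g::field itself \<Rightarrow> 'a::topological_space set \<Rightarrow> nat
    \<Rightarrow> ('a set set \<Rightarrow> ('a set list \<Rightarrow> 'g) set) set" where
  "cech_homology G S k = {\<gamma>.
     (\<forall>\<U>. open_cover S \<U> \<longrightarrow> \<gamma> \<U> \<in> nerve_homology \<U> k) \<and>
     (\<forall>\<U> \<V> p. open_cover S \<U> \<and> open_cover S \<V> \<and> is_proj \<V> \<U> p \<longrightarrow>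
                 (\<forall>c\<in>\<gamma> \<V>. push p c \<in> \<gamma> \<U>)) \<and>
     (\<forall>\<U>. \<not> open_cover S \<U> \<longrightarrow> \<gamma> \<U> = {})}"

definition cech_zero :: "'a::topological_space set \<Rightarrow> nat \<Rightarrow> ('a set set \<Rightarrow> ('a set list \<Rightarrow> 'g::field) set) \<Rightarrow> bool" where
  "cech_zero S k \<gamma> \<longleftrightarrow> (\<forall>\<U>. open_cover S \<U> \<longrightarrow> \<gamma> \<U> = boundaries \<U> k)"

text \<open>i_{F,X}(gamma) = 0, for F subset of X: at each cover U of X the class of gamma at
  the trace cover U|F is mapped into N(U) to the zero class.\<close>
definition incl_image_zero :: "'a::topological_space set \<Rightarrow> 'a set \<Rightarrow> nat
    \<Rightarrow> ('a set set \<Rightarrow> ('a set list \<Rightarrow> 'g::field) set) \<Rightarrow> bool" where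
  "incl_image_zero F X k \<gamma> \<longleftrightarrow>
     (\<forall>\<U> p. open_cover X \<U> \<and> is_proj ((\<lambda>U. U \<inter> F) ` \<U>) \<U> p \<longrightarrow>
        (\<forall>c \<in> \<gamma> ((\<lambda>U. U \<inter> F) ` \<U>). push p c \<in> boundaries \<U> k))"

definition hom_dim_set :: "'g::field itself \<Rightarrow> 'a::topological_space set \<Rightarrow> nat set" where
  "hom_dim_set G X = {k. k \<ge> 1 \<and> (\<exists>F \<gamma>. closed F \<and> F \<subseteq> X \<and> \<gamma> \<in> cech_homology G F (k - 1)
        \<and> \<not> cech_zero F (k - 1) \<gamma> \<and> incl_image_zero F X (k - 1) \<gamma>)}"

text \<open>Relative simplices: those of N(U) not in the subcomplex N_A(U).\<close>
definition rel_simp :: "'a set set \<Rightarrow> 'a set \<Rightarrow> nat \<Rightarrow> 'a set list set" where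
  "rel_simp \<U> A k = {\<sigma> \<in> nerve_simp \<U> k. \<Inter>(set \<sigma>) \<inter> A = {}}"

definition cochains :: "'a set set \<Rightarrow> 'a set \<Rightarrow> nat \<Rightarrow> ('a set list \<Rightarrow> 'g::field) set" where
  "cochains \<U> A k = {f. \<forall>\<sigma>. f \<sigma> \<noteq> 0 \<longrightarrow> \<sigma> \<in> rel_simp \<U> A k}"

definition cobd :: "'a set set \<Rightarrow> nat \<Rightarrow> ('a set list \<Rightarrow> 'g::field) \<Rightarrow> 'a set list \<Rightarrow> 'g" where
  "cobd \<U> k f \<sigma> = (if \<sigma> \<in> nerve_simp \<U> (Suc k)
      then (\<Sum>i<Suc (Suc k). (-1) ^ i * f (del_nth i \<sigma>)) else 0)"

definition cocycles :: "'a set set \<Rightarrow> 'a set \<Rightarrow> nat \<Rightarrow> ('a set list \<Rightarrow> 'g::field) set" where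
  "cocycles \<U> A k = {f \<in> cochains \<U> A k. cobd \<U> k f = (\<lambda>_. 0)}"

text \<open>Coboundaries of the (reduced, when A is empty) relative cochain complex.\<close>
definition is_cobd :: "'a set set \<Rightarrow> 'a set \<Rightarrow> nat \<Rightarrow> ('a set list \<Rightarrow> 'g::field) \<Rightarrow> bool" where
  "is_cobd \<U> A k f = (case k of
      0 \<Rightarrow> A = {} \<and> (\<exists>c. \<forall>\<sigma>\<in>nerve_simp \<U> 0. f \<sigma> = c)
    | Suc j \<Rightarrow> (\<exists>g \<in> cochains \<U> A j. f = cobd \<U> j g))"

definition pull :: "'a set set \<Rightarrow> nat \<Rightarrow> ('a set \<Rightarrow> 'a set) \<Rightarrow> ('a set list \<Rightarrow> 'g::field) \<Rightarrow> 'a set list \<Rightarrow> 'g" where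
  "pull \<V> k p f \<sigma> = (if \<sigma> \<in> nerve_simp \<V> k then f (map p \<sigma>) else 0)"

text \<open>H^n(X,A;G) \<noteq> 0 for the direct limit over finite open covers: some cocycle on some
  cover stays non-cohomologous to zero on every refinement.\<close>
definition cech_cohom_nonzero :: "'g::field itself \<Rightarrow> 'a::topological_space set \<Rightarrow> 'a set \<Rightarrow> nat \<Rightarrow> bool" where
  "cech_cohom_nonzero G X A n \<longleftrightarrow>
     (\<exists>\<U> (f :: 'a set list \<Rightarrow> 'g). open_cover X \<U> \<and> f \<in> cocycles \<U> A n \<and>
        (\<forall>\<V> p. open_cover X \<V> \<and> is_proj \<V> \<U> p \<longrightarrow> \<not> is_cobd \<V> A n (pull \<V> n p f)))"

end

theory Submission
  imports Defs "HOL-Library.Function_Algebras"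
begin

text \<open>
  If \<open>\<gamma> \<in> H\<^sub>k\<^sub>-\<^sub>1(F;G)\<close> is nonzero but dies in \<open>X\<close>, then, \<open>G\<close> being a field, some nerve of
  \<open>F\<close> carries a \<open>(k-1)\<close>-cocycle \<open>a\<close> that pairs nontrivially with \<open>\<gamma>\<close>. Extend the members of
  that cover of \<open>F\<close> to open sets of \<open>X\<close>, add \<open>X - F\<close>, and transport \<open>a\<close> to a cochain \<open>\<beta>\<close> on
  the nerve of this cover of \<open>X\<close>. Since \<open>a\<close> is a cocycle, \<open>\<delta>\<beta>\<close> vanishes on simplices meeting \<open>F\<close>:
  it is a relative \<open>k\<close>-cocycle of \<open>(X, F)\<close>, the image of \<open>[a]\<close> under the connecting homomorphism.
  If \<open>\<delta>\<beta>\<close> became a relative coboundary \<open>\<delta>g\<close> on a refinement, \<open>\<beta> - g\<close> would be a cocycle on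
  \<open>X\<close> restricting to \<open>a\<close> on \<open>F\<close>; it would pair nontrivially with \<open>\<gamma>\<close>, yet trivially with the
  image of \<open>\<gamma>\<close> in \<open>X\<close>, which is a boundary. Hence \<open>H\<^sup>k(X, F; G) \<noteq> 0\<close>.
\<close>

section \<open>The Kronecker pairing\<close>

definition kronecker :: "('b \<Rightarrow> 'g::field) \<Rightarrow> ('b \<Rightarrow> 'g) \<Rightarrow> 'g" where
  "kronecker h c = (\<Sum>\<sigma>\<in>{\<sigma>. c \<sigma> \<noteq> 0}. c \<sigma> * h \<sigma>)"

lemma kronecker_superset:
  assumes "finite S" "{\<sigma>. c \<sigma> \<noteq> 0} \<subseteq> S"
  shows "kronecker h c = (\<Sum>\<sigma>\<in>S. c \<sigma> * h \<sigma>)"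
  unfolding kronecker_def by (rule sum.mono_neutral_left) (use assms in auto)

lemma kronecker_cong:
  assumes "\<And>\<sigma>. c \<sigma> \<noteq> 0 \<Longrightarrow> h \<sigma> = h' \<sigma>"
  shows "kronecker h c = kronecker h' c"
  unfolding kronecker_def using assms by (intro sum.cong) auto

lemma kronecker_add:
  assumes "finite {\<sigma>. c \<sigma> \<noteq> 0}" "finite {\<sigma>. d \<sigma> \<noteq> 0}"
  shows "kronecker h (\<lambda>\<sigma>. c \<sigma> + d \<sigma>) = kronecker h c + kronecker h d"
proof -
  let ?S = "{\<sigma>. c \<sigma> \<noteq> 0} \<union> {\<sigma>. d \<sigma> \<noteq> 0}"
  have S: "finite ?S" using assms by auto
  have "kronecker h (\<lambda>\<sigma>. c \<sigma> + d \<sigma>) = (\<Sum>\<sigma>\<in>?S. (c \<sigma> + d \<sigma>) * h \<sigma>)"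
    by (rule kronecker_superset[OF S]) auto
  also have "\<dots> = (\<Sum>\<sigma>\<in>?S. c \<sigma> * h \<sigma>) + (\<Sum>\<sigma>\<in>?S. d \<sigma> * h \<sigma>)"
    by (simp add: distrib_right sum.distrib)
  also have "\<dots> = kronecker h c + kronecker h d"
    using kronecker_superset[OF S, of c h] kronecker_superset[OF S, of d h] by auto
  finally show ?thesis .
qed

lemma support_push: "{\<tau>. push p c \<tau> \<noteq> 0} \<subseteq> map p ` {\<sigma>. c \<sigma> \<noteq> 0}"
proof
  fix \<tau> assume "\<tau> \<in> {\<tau>. push p c \<tau> \<noteq> 0}"
  then have "push p c \<tau> \<noteq> 0" by simp
  then have "\<exists>\<sigma>. c \<sigma> \<noteq> 0 \<and> map p \<sigma> = \<tau>"
    unfolding push_def by (rule contrapos_np) (auto intro!: sum.neutral)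
  then show "\<tau> \<in> map p ` {\<sigma>. c \<sigma> \<noteq> 0}" by auto
qed

lemma support_bd: "{\<tau>. bd c \<tau> \<noteq> 0} \<subseteq> (\<Union>\<sigma>\<in>{\<sigma>. c \<sigma> \<noteq> 0}. (\<lambda>i. del_nth i \<sigma>) ` {..<length \<sigma>})"
proof
  fix \<tau> assume "\<tau> \<in> {\<tau>. bd c \<tau> \<noteq> 0}"
  then have "bd c \<tau> \<noteq> 0" by simp
  then have "\<exists>\<sigma> i. c \<sigma> \<noteq> 0 \<and> i < length \<sigma> \<and> del_nth i \<sigma> = \<tau>"
    unfolding bd_def by (rule contrapos_np) (auto intro!: sum.neutral)
  then show "\<tau> \<in> (\<Union>\<sigma>\<in>{\<sigma>. c \<sigma> \<noteq> 0}. (\<lambda>i. del_nth i \<sigma>) ` {..<length \<sigma>})" by auto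
qed

lemma finite_support_bd: "finite {\<sigma>. c \<sigma> \<noteq> 0} \<Longrightarrow> finite {\<tau>. bd c \<tau> \<noteq> 0}"
  by (rule finite_subset[OF support_bd]) auto

lemma kronecker_push:
  assumes fin: "finite {\<sigma>. c \<sigma> \<noteq> 0}"
  shows "kronecker h (push p c) = kronecker (\<lambda>\<sigma>. h (map p \<sigma>)) c"
proof -
  let ?C = "{\<sigma>. c \<sigma> \<noteq> 0}"
  let ?S = "map p ` ?C"
  have "kronecker h (push p c) = (\<Sum>\<tau>\<in>?S. push p c \<tau> * h \<tau>)"
    by (rule kronecker_superset) (use fin support_push in auto)
  also have "\<dots> = (\<Sum>\<tau>\<in>?S. \<Sum>\<sigma>\<in>?C. if map p \<sigma> = \<tau> then c \<sigma> * h \<tau> else 0)"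
    unfolding push_def by (auto simp: sum_distrib_right intro!: sum.cong)
  also have "\<dots> = (\<Sum>\<sigma>\<in>?C. \<Sum>\<tau>\<in>?S. if map p \<sigma> = \<tau> then c \<sigma> * h \<tau> else 0)"
    by (rule sum.swap)
  also have "\<dots> = kronecker (\<lambda>\<sigma>. h (map p \<sigma>)) c"
    using fin unfolding kronecker_def by (auto intro!: sum.cong)
  finally show ?thesis .
qed

lemma kronecker_bd_expand:
  assumes fin: "finite {\<sigma>. c \<sigma> \<noteq> 0}"
  shows "kronecker h (bd c) =
    (\<Sum>\<sigma>\<in>{\<sigma>. c \<sigma> \<noteq> 0}. c \<sigma> * (\<Sum>i<length \<sigma>. (-1) ^ i * h (del_nth i \<sigma>)))"
proof -
  let ?C = "{\<sigma>. c \<sigma> \<noteq> 0}"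
  let ?S = "(\<Union>\<sigma>\<in>?C. (\<lambda>i. del_nth i \<sigma>) ` {..<length \<sigma>})"
  let ?t = "\<lambda>\<sigma> i \<tau>. if del_nth i \<sigma> = \<tau> then (-1) ^ i * c \<sigma> * h \<tau> else 0"
  have S: "finite ?S" using fin by auto
  have "kronecker h (bd c) = (\<Sum>\<tau>\<in>?S. bd c \<tau> * h \<tau>)"
    by (rule kronecker_superset) (use S support_bd in auto)
  also have "\<dots> = (\<Sum>\<tau>\<in>?S. \<Sum>\<sigma>\<in>?C. \<Sum>i<length \<sigma>. ?t \<sigma> i \<tau>)"
    unfolding bd_def by (auto simp: sum_distrib_right intro!: sum.cong)
  also have "\<dots> = (\<Sum>\<sigma>\<in>?C. \<Sum>i<length \<sigma>. \<Sum>\<tau>\<in>?S. ?t \<sigma> i \<tau>)"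
    by (subst sum.swap) (rule sum.cong[OF refl], rule sum.swap)
  also have "\<dots> = (\<Sum>\<sigma>\<in>?C. \<Sum>i<length \<sigma>. (-1) ^ i * c \<sigma> * h (del_nth i \<sigma>))"
    using S by (intro sum.cong refl) auto
  also have "\<dots> = (\<Sum>\<sigma>\<in>?C. c \<sigma> * (\<Sum>i<length \<sigma>. (-1) ^ i * h (del_nth i \<sigma>)))"
    by (auto intro!: sum.cong simp: sum_distrib_left mult_ac)
  finally show ?thesis .
qed

section \<open>Faces of nerve simplices\<close>

lemma del_nth_0 [simp]: "del_nth 0 (x # xs) = xs"
  by (simp add: del_nth_def)

lemma del_nth_Suc [simp]: "del_nth (Suc i) (x # xs) = x # del_nth i xs"
  by (simp add: del_nth_def)

lemma length_del_nth: "i < length xs \<Longrightarrow> length (del_nth i xs) = length xs - 1"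
  by (simp add: del_nth_def)

lemma set_del_nth_subset: "set (del_nth i xs) \<subseteq> set xs"
  unfolding del_nth_def using set_take_subset set_drop_subset by fastforce

lemma map_del_nth: "map p (del_nth i xs) = del_nth i (map p xs)"
  by (simp add: del_nth_def take_map drop_map)

lemma del_nth_del_nth: "i \<le> l \<Longrightarrow> del_nth l (del_nth i xs) = del_nth i (del_nth (Suc l) xs)"
proof (induction xs arbitrary: i l)
  case Nil
  then show ?case by (simp add: del_nth_def)
next
  case (Cons x xs)
  show ?case
  proof (cases i)
    case (Suc i')
    then obtain l' where "l = Suc l'" using Cons.prems by (cases l) auto
    then show ?thesis using Cons Suc by simp
  qed simp
qed

lemma nerve_simp_del_nth:
  assumes "\<sigma> \<in> nerve_simp \<U> (Suc k)" "i < Suc (Suc k)"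
  shows "del_nth i \<sigma> \<in> nerve_simp \<U> k"
proof -
  have "\<Inter>(set \<sigma>) \<subseteq> \<Inter>(set (del_nth i \<sigma>))"
    by (rule Inter_anti_mono[OF set_del_nth_subset])
  then show ?thesis
    using assms set_del_nth_subset[of i \<sigma>] by (auto simp: nerve_simp_def length_del_nth)
qed

lemma nerve_simp_map:
  assumes "is_proj \<V> \<U> p" "\<sigma> \<in> nerve_simp \<V> k"
  shows "map p \<sigma> \<in> nerve_simp \<U> k" "\<Inter>(set \<sigma>) \<subseteq> \<Inter>(set (map p \<sigma>))"
proof -
  show sub: "\<Inter>(set \<sigma>) \<subseteq> \<Inter>(set (map p \<sigma>))"
    using assms unfolding is_proj_def nerve_simp_def by auto
  show "map p \<sigma> \<in> nerve_simp \<U> k"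
    using assms sub unfolding is_proj_def nerve_simp_def by auto
qed

section \<open>Cochains\<close>

text \<open>The alternating double sum of faces of faces cancels in pairs: the face \<open>(i, l)\<close> with
  \<open>i \<le> l\<close> equals the face \<open>(Suc l, i)\<close>, which carries the opposite sign.\<close>
lemma alternating_sum_del_nth_del_nth:
  fixes g :: "'b list \<Rightarrow> 'g::comm_ring_1"
  shows "(\<Sum>i<Suc n. \<Sum>l<n. (-1) ^ (i + l) * g (del_nth l (del_nth i xs))) = 0"
proof -
  define t where "t = (\<lambda>(i, l). (-1::'g) ^ (i + l) * g (del_nth l (del_nth i xs)))"
  define A where "A = {(i, l). i \<le> l \<and> l < n}"
  define B where "B = {(i, l). l < i \<and> i < Suc n}"
  have AB: "{..<Suc n} \<times> {..<n} = A \<union> B" "A \<inter> B = {}"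
    unfolding A_def B_def by auto
  have fin: "finite A" "finite B"
    by (rule finite_subset[of _ "{..<Suc n} \<times> {..<n}"]; auto simp: A_def B_def)+
  have bij: "bij_betw (\<lambda>(i, l). (Suc l, i)) A B"
    by (rule bij_betw_byWitness[where f' = "\<lambda>(i, l). (l, i - 1)"]) (auto simp: A_def B_def)
  have "t (Suc l, i) = - t (i, l)" if "(i, l) \<in> A" for i l
    using that by (simp add: t_def A_def del_nth_del_nth add.commute)
  then have "(\<Sum>x\<in>A. t ((\<lambda>(i, l). (Suc l, i)) x)) = - sum t A"
    by (auto simp: sum_negf[symmetric] intro!: sum.cong)
  then have "sum t B = - sum t A"
    using sum.reindex_bij_betw[OF bij, of t] by metis
  moreover have "(\<Sum>i<Suc n. \<Sum>l<n. (-1) ^ (i + l) * g (del_nth l (del_nth i xs))) = sum t A + sum t B"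
    unfolding t_def by (simp add: sum.cartesian_product AB sum.union_disjoint fin)
  ultimately show ?thesis by simp
qed

lemma cobd_cobd: "cobd \<U> (Suc k) (cobd \<U> k f) = (\<lambda>_. 0)"
proof
  fix \<sigma>
  show "cobd \<U> (Suc k) (cobd \<U> k f) \<sigma> = 0"
  proof (cases "\<sigma> \<in> nerve_simp \<U> (Suc (Suc k))")
    case True
    have "cobd \<U> (Suc k) (cobd \<U> k f) \<sigma> =
        (\<Sum>i<Suc (Suc (Suc k)). \<Sum>l<Suc (Suc k). (-1) ^ (i + l) * f (del_nth l (del_nth i \<sigma>)))"
      using True nerve_simp_del_nth[OF True]
      by (simp add: cobd_def sum_distrib_left power_add mult.assoc del: sum.lessThan_Suc)
    also have "\<dots> = 0" by (rule alternating_sum_del_nth_del_nth)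
    finally show ?thesis .
  qed (simp add: cobd_def)
qed

lemma cobd_pull:
  assumes "is_proj \<V> \<U> p"
  shows "cobd \<V> k (pull \<V> k p f) = pull \<V> (Suc k) p (cobd \<U> k f)"
proof
  fix \<sigma>
  show "cobd \<V> k (pull \<V> k p f) \<sigma> = pull \<V> (Suc k) p (cobd \<U> k f) \<sigma>"
  proof (cases "\<sigma> \<in> nerve_simp \<V> (Suc k)")
    case True
    then show ?thesis
      using nerve_simp_del_nth[OF True] nerve_simp_map(1)[OF assms True]
      by (simp add: cobd_def pull_def map_del_nth)
  qed (simp add: cobd_def pull_def)
qed

lemma cobd_diff: "cobd \<U> k (\<lambda>\<tau>. x \<tau> - y \<tau>) = (\<lambda>\<sigma>. cobd \<U> k x \<sigma> - cobd \<U> k y \<sigma>)"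
  unfolding cobd_def by (rule ext) (simp add: sum_subtractf right_diff_distrib)

section \<open>Chains and boundaries\<close>

lemma chainsD:
  assumes "c \<in> chains \<U> k"
  shows "finite {\<sigma>. c \<sigma> \<noteq> 0}" "c \<sigma> \<noteq> 0 \<Longrightarrow> \<sigma> \<in> nerve_simp \<U> k"
  using assms by (auto simp: chains_def)

lemma chains_add:
  assumes "x \<in> chains \<U> k" "y \<in> chains \<U> k"
  shows "(\<lambda>\<sigma>. x \<sigma> + y \<sigma>) \<in> chains \<U> k"
proof -
  have "{\<sigma>. x \<sigma> + y \<sigma> \<noteq> 0} \<subseteq> {\<sigma>. x \<sigma> \<noteq> 0} \<union> {\<sigma>. y \<sigma> \<noteq> 0}" by auto
  with assms show ?thesis unfolding chains_def by (auto intro: finite_subset)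
qed

lemma chains_scale: "x \<in> chains \<U> k \<Longrightarrow> (\<lambda>\<sigma>. r * x \<sigma>) \<in> chains \<U> k"
  unfolding chains_def by (auto elim!: finite_subset[rotated])

lemma bd_superset:
  assumes "finite S" "{\<sigma>. c \<sigma> \<noteq> 0} \<subseteq> S"
  shows "bd c \<tau> = (\<Sum>\<sigma>\<in>S. \<Sum>i<length \<sigma>. if del_nth i \<sigma> = \<tau> then (-1) ^ i * c \<sigma> else 0)"
  unfolding bd_def by (rule sum.mono_neutral_left) (use assms in \<open>auto intro: sum.neutral\<close>)

lemma bd_add:
  assumes "finite {\<sigma>. x \<sigma> \<noteq> 0}" "finite {\<sigma>. y \<sigma> \<noteq> 0}"
  shows "bd (\<lambda>\<sigma>. x \<sigma> + y \<sigma>) = (\<lambda>\<tau>. bd x \<tau> + bd y \<tau>)"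
proof
  fix \<tau>
  let ?S = "{\<sigma>. x \<sigma> \<noteq> 0} \<union> {\<sigma>. y \<sigma> \<noteq> 0}"
  have S: "finite ?S" using assms by simp
  have "bd (\<lambda>\<sigma>. x \<sigma> + y \<sigma>) \<tau> =
      (\<Sum>\<sigma>\<in>?S. \<Sum>i<length \<sigma>. if del_nth i \<sigma> = \<tau> then (-1) ^ i * (x \<sigma> + y \<sigma>) else 0)"
    by (rule bd_superset[OF S]) auto
  also have "\<dots> = (\<Sum>\<sigma>\<in>?S. \<Sum>i<length \<sigma>. if del_nth i \<sigma> = \<tau> then (-1) ^ i * x \<sigma> else 0)
      + (\<Sum>\<sigma>\<in>?S. \<Sum>i<length \<sigma>. if del_nth i \<sigma> = \<tau> then (-1) ^ i * y \<sigma> else 0)"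
    by (simp add: sum.distrib[symmetric] distrib_left if_distrib cong: if_cong)
  also have "\<dots> = bd x \<tau> + bd y \<tau>"
    using bd_superset[OF S, of x \<tau>] bd_superset[OF S, of y \<tau>] by auto
  finally show "bd (\<lambda>\<sigma>. x \<sigma> + y \<sigma>) \<tau> = bd x \<tau> + bd y \<tau>" .
qed

lemma bd_scale:
  assumes "finite {\<sigma>. x \<sigma> \<noteq> 0}"
  shows "bd (\<lambda>\<sigma>. r * x \<sigma>) = (\<lambda>\<tau>. r * bd x \<tau>)"
proof
  fix \<tau>
  show "bd (\<lambda>\<sigma>. r * x \<sigma>) \<tau> = r * bd x \<tau>"
    using bd_superset[OF assms, of "\<lambda>\<sigma>. r * x \<sigma>" \<tau>] bd_superset[OF assms, of x \<tau>]
    by (auto simp: sum_distrib_left if_distrib mult.left_commute cong: if_cong)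
qed

lemma bd_chains:
  assumes "c \<in> chains \<U> (Suc k)"
  shows "bd c \<in> chains \<U> k"
proof -
  have "\<tau> \<in> nerve_simp \<U> k" if "bd c \<tau> \<noteq> 0" for \<tau>
  proof -
    have "\<tau> \<in> (\<Union>\<sigma>\<in>{\<sigma>. c \<sigma> \<noteq> 0}. (\<lambda>i. del_nth i \<sigma>) ` {..<length \<sigma>})"
      using support_bd[of c] that by blast
    then obtain \<sigma> i where \<sigma>: "c \<sigma> \<noteq> 0" "i < length \<sigma>" "\<tau> = del_nth i \<sigma>" by blast
    have "\<sigma> \<in> nerve_simp \<U> (Suc k)" using chainsD(2)[OF assms] \<sigma>(1) .
    moreover from this have "i < Suc (Suc k)" using \<sigma>(2) by (simp add: nerve_simp_def)
    ultimately show ?thesis using nerve_simp_del_nth \<sigma>(3) by blast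
  qed
  then show ?thesis using finite_support_bd[OF chainsD(1)[OF assms]] by (simp add: chains_def)
qed

lemma kronecker_bd:
  assumes "c \<in> chains \<U> (Suc k)"
  shows "kronecker h (bd c) = kronecker (cobd \<U> k h) c"
proof -
  have "kronecker h (bd c) =
      (\<Sum>\<sigma>\<in>{\<sigma>. c \<sigma> \<noteq> 0}. c \<sigma> * (\<Sum>i<length \<sigma>. (-1) ^ i * h (del_nth i \<sigma>)))"
    by (rule kronecker_bd_expand[OF chainsD(1)[OF assms]])
  also have "\<dots> = kronecker (cobd \<U> k h) c"
    unfolding kronecker_def using chainsD(2)[OF assms]
    by (intro sum.cong) (auto simp: cobd_def nerve_simp_def simp del: sum.lessThan_Suc)
  finally show ?thesis .
qed

lemma boundaries_add:
  assumes "x \<in> boundaries \<U> k" "y \<in> boundaries \<U> k"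
  shows "(\<lambda>\<sigma>. x \<sigma> + y \<sigma>) \<in> boundaries \<U> k"
proof -
  obtain e e' where e: "e \<in> chains \<U> (Suc k)" "x = bd e" "e' \<in> chains \<U> (Suc k)" "y = bd e'"
    using assms unfolding boundaries_def by blast
  then have "(\<lambda>\<sigma>. x \<sigma> + y \<sigma>) = bd (\<lambda>\<sigma>. e \<sigma> + e' \<sigma>)"
    using bd_add[OF chainsD(1)[OF e(1)] chainsD(1)[OF e(3)]] by simp
  then show ?thesis unfolding boundaries_def using chains_add[OF e(1) e(3)] by blast
qed

lemma boundaries_scale:
  assumes "x \<in> boundaries \<U> k"
  shows "(\<lambda>\<sigma>. r * x \<sigma>) \<in> boundaries \<U> k"
proof -
  obtain e where e: "e \<in> chains \<U> (Suc k)" "x = bd e"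
    using assms unfolding boundaries_def by blast
  then have "(\<lambda>\<sigma>. r * x \<sigma>) = bd (\<lambda>\<sigma>. r * e \<sigma>)"
    using bd_scale[OF chainsD(1)[OF e(1)]] by simp
  then show ?thesis unfolding boundaries_def using chains_scale[OF e(1)] by blast
qed

lemma boundaries_zero: "(\<lambda>_. 0) \<in> boundaries \<U> k"
proof -
  have "(\<lambda>_. 0) = bd (\<lambda>_. 0)" by (rule ext) (simp add: bd_def)
  moreover have "(\<lambda>_. 0) \<in> chains \<U> (Suc k)" by (simp add: chains_def)
  ultimately show ?thesis unfolding boundaries_def by (rule image_eqI)
qed

lemma boundaries_chains: "b \<in> boundaries \<U> k \<Longrightarrow> b \<in> chains \<U> k"
  unfolding boundaries_def using bd_chains by blast

lemma kronecker_cocycle_boundary: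
  assumes "cobd \<U> k h = (\<lambda>_. 0)" "b \<in> boundaries \<U> k"
  shows "kronecker h b = 0"
proof -
  obtain e where "e \<in> chains \<U> (Suc k)" "b = bd e"
    using assms(2) unfolding boundaries_def by blast
  then have "kronecker h b = kronecker (cobd \<U> k h) e" using kronecker_bd by blast
  then show ?thesis using assms(1) by (simp add: kronecker_def)
qed

lemma hclass_self: "c \<in> hclass \<U> k c"
  unfolding hclass_def using boundaries_zero by force

lemma hclass_boundary:
  fixes c :: "'a set list \<Rightarrow> 'g::field"
  assumes "c \<in> boundaries \<U> k"
  shows "hclass \<U> k c = boundaries \<U> k"
proof
  show "hclass \<U> k c \<subseteq> boundaries \<U> k"
    unfolding hclass_def using boundaries_add[OF assms] by blast
  show "boundaries \<U> k \<subseteq> hclass \<U> k c"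
  proof
    fix b :: "'a set list \<Rightarrow> 'g" assume "b \<in> boundaries \<U> k"
    then have "(\<lambda>\<sigma>. b \<sigma> + (-1) * c \<sigma>) \<in> boundaries \<U> k"
      using boundaries_add boundaries_scale[OF assms] by blast
    moreover have "b = (\<lambda>\<sigma>. c \<sigma> + (b \<sigma> + (-1) * c \<sigma>))" by auto
    ultimately show "b \<in> hclass \<U> k c"
      unfolding hclass_def by (intro CollectI exI[of _ "\<lambda>\<sigma>. b \<sigma> + (-1) * c \<sigma>"]) simp
  qed
qed

section \<open>Cocycles detecting homology classes\<close>

lemma linear_functional_separating:
  fixes B :: "('b \<Rightarrow> 'g::field) set"
  assumes "0 \<in> B" "\<And>x y. x \<in> B \<Longrightarrow> y \<in> B \<Longrightarrow> x + y \<in> B"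
    and "\<And>r x. x \<in> B \<Longrightarrow> (\<lambda>s. r * x s) \<in> B" and "c \<notin> B"
  obtains \<phi> where "\<And>x y. \<phi> (x + y) = \<phi> x + \<phi> y" "\<And>r x. \<phi> (\<lambda>s. r * x s) = r * \<phi> x"
    "\<phi> c = 1" "\<And>b. b \<in> B \<Longrightarrow> \<phi> b = 0"
proof -
  define sc :: "'g \<Rightarrow> ('b \<Rightarrow> 'g) \<Rightarrow> 'b \<Rightarrow> 'g" where "sc = (\<lambda>r x s. r * x s)"
  interpret V: vector_space sc
    by unfold_locales (auto simp: sc_def fun_eq_iff algebra_simps)
  interpret P: vector_space_pair sc "(*) :: 'g \<Rightarrow> 'g \<Rightarrow> 'g"
    by unfold_locales (auto simp: algebra_simps)
  have "V.subspace B"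
    unfolding V.subspace_def using assms by (auto simp: sc_def)
  obtain I where I: "I \<subseteq> B" "V.independent I" "B \<subseteq> V.span I"
    using V.maximal_independent_subset by blast
  have spanI: "V.span I = B" using V.span_minimal[OF I(1) \<open>V.subspace B\<close>] I(3) by blast
  then have ind: "V.independent (insert c I)" using V.independent_insertI I(2) assms(4) by blast
  define \<phi> where "\<phi> = P.construct (insert c I) (\<lambda>x. if x = c then 1 else 0)"
  have lin: "Vector_Spaces.linear sc (*) \<phi>"
    unfolding \<phi>_def by (rule P.linear_construct[OF ind])
  interpret L: Vector_Spaces.linear sc "(*)" \<phi> by (rule lin)
  have "\<phi> b = 0" if "b \<in> B" for b
  proof -
    have "\<phi> x = 0" if "x \<in> I" for x
      unfolding \<phi>_def using that I(1) assms(4) by (subst P.construct_basis[OF ind]) auto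
    then show ?thesis using P.linear_eq_0_on_span[OF lin, of I b] \<open>b \<in> B\<close> spanI by blast
  qed
  moreover have "\<phi> c = 1" unfolding \<phi>_def by (subst P.construct_basis[OF ind]) auto
  moreover have "\<phi> (\<lambda>s. r * x s) = r * \<phi> x" for r x
    using L.scale[of r x] by (simp add: sc_def)
  ultimately show ?thesis using that L.add by blast
qed

lemma linear_functional_as_kronecker:
  fixes \<phi> :: "('b \<Rightarrow> 'g::field) \<Rightarrow> 'g"
  assumes add: "\<And>x y. \<phi> (x + y) = \<phi> x + \<phi> y"
    and scale: "\<And>r x. \<phi> (\<lambda>s. r * x s) = r * \<phi> x"
    and fin: "finite {\<sigma>. c \<sigma> \<noteq> 0}"
  shows "\<phi> c = kronecker (\<lambda>\<sigma>. \<phi> (\<lambda>\<tau>. if \<tau> = \<sigma> then 1 else 0)) c"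
proof -
  have "\<phi> c = (\<Sum>\<sigma>\<in>S. c \<sigma> * \<phi> (\<lambda>\<tau>. if \<tau> = \<sigma> then 1 else 0))"
    if "finite S" "{\<sigma>. c \<sigma> \<noteq> 0} \<subseteq> S" for S c
    using that
  proof (induction S arbitrary: c rule: finite_induct)
    case empty
    have "\<phi> (\<lambda>s. 0 * c s) = 0 * \<phi> c" by (rule scale)
    with empty show ?case by (simp add: fun_eq_iff)
  next
    case (insert x S)
    have split: "c = c(x := 0) + (\<lambda>s. c x * (if s = x then 1 else 0))"
      by (auto simp: fun_eq_iff)
    have "\<phi> c = \<phi> (c(x := 0)) + c x * \<phi> (\<lambda>\<tau>. if \<tau> = x then 1 else 0)"
      by (subst split) (simp add: add scale)
    also have "\<phi> (c(x := 0)) = (\<Sum>\<sigma>\<in>S. (c(x := 0)) \<sigma> * \<phi> (\<lambda>\<tau>. if \<tau> = \<sigma> then 1 else 0))"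
      by (rule insert.IH) (use insert.prems in auto)
    also have "\<dots> = (\<Sum>\<sigma>\<in>S. c \<sigma> * \<phi> (\<lambda>\<tau>. if \<tau> = \<sigma> then 1 else 0))"
      using insert.hyps(2) by (intro sum.cong) auto
    finally show ?case using insert.hyps by (simp add: add.commute)
  qed
  from this[OF fin order_refl] show ?thesis unfolding kronecker_def .
qed

lemma separating_cocycle:
  fixes c :: "'a set list \<Rightarrow> 'g::field"
  assumes "c \<in> chains \<W> j" "c \<notin> boundaries \<W> j"
  obtains a where "kronecker a c \<noteq> 0" "cobd \<W> j a = (\<lambda>_. 0)"
proof -
  have zero: "(0 :: 'a set list \<Rightarrow> 'g) \<in> boundaries \<W> j" using boundaries_zero by (simp add: zero_fun_def)
  have add: "x + y \<in> boundaries \<W> j"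
    if "x \<in> boundaries \<W> j" "y \<in> boundaries \<W> j" for x y :: "'a set list \<Rightarrow> 'g"
    using boundaries_add[OF that] by (simp add: plus_fun_def)
  obtain \<phi> :: "('a set list \<Rightarrow> 'g) \<Rightarrow> 'g" where \<phi>: "\<And>x y. \<phi> (x + y) = \<phi> x + \<phi> y" "\<And>r x. \<phi> (\<lambda>s. r * x s) = r * \<phi> x"
      "\<phi> c = 1" "\<And>b. b \<in> boundaries \<W> j \<Longrightarrow> \<phi> b = 0"
    using linear_functional_separating[OF zero add boundaries_scale assms(2)] by metis
  define a where "a \<sigma> = \<phi> (\<lambda>\<tau>. if \<tau> = \<sigma> then 1 else 0)" for \<sigma>
  have kron: "\<phi> x = kronecker a x" if "finite {\<sigma>. x \<sigma> \<noteq> 0}" for x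
    unfolding a_def using linear_functional_as_kronecker[OF \<phi>(1,2) that] .
  have "cobd \<W> j a \<tau> = 0" for \<tau>
  proof (cases "\<tau> \<in> nerve_simp \<W> (Suc j)")
    case True
    define e where "e \<sigma> = (if \<sigma> = \<tau> then (1::'g) else 0)" for \<sigma>
    have e: "e \<in> chains \<W> (Suc j)" using True by (simp add: chains_def e_def)
    have "cobd \<W> j a \<tau> = kronecker (cobd \<W> j a) e"
      by (simp add: kronecker_def e_def)
    also have "\<dots> = \<phi> (bd e)"
      using kronecker_bd[OF e] kron[OF finite_support_bd[OF chainsD(1)[OF e]]] by simp
    also have "\<dots> = 0" using e by (intro \<phi>(4)) (simp add: boundaries_def)
    finally show ?thesis .
  qed (simp add: cobd_def)
  then have "cobd \<W> j a = (\<lambda>_. 0)" by (rule ext)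
  moreover have "kronecker a c \<noteq> 0" using kron[OF chainsD(1)[OF assms(1)]] \<phi>(3) by simp
  ultimately show ?thesis using that by simp
qed

lemma cech_homology_representative:
  assumes "\<gamma> \<in> cech_homology G S k" "open_cover S \<U>"
  obtains c where "c \<in> cycles \<U> k" "\<gamma> \<U> = hclass \<U> k c"
  using assms unfolding cech_homology_def nerve_homology_def by blast

lemma cech_homology_push:
  assumes "\<gamma> \<in> cech_homology G S k" "open_cover S \<U>" "open_cover S \<V>" "is_proj \<V> \<U> p"
    and "c \<in> \<gamma> \<V>"
  shows "push p c \<in> \<gamma> \<U>"
  using assms unfolding cech_homology_def by blast

lemma incl_image_zeroD:
  assumes "incl_image_zero F X k \<gamma>" "open_cover X \<V>" "is_proj ((\<lambda>V. V \<inter> F) ` \<V>) \<V> p"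
    and "c \<in> \<gamma> ((\<lambda>V. V \<inter> F) ` \<V>)"
  shows "push p c \<in> boundaries \<V> k"
  using assms unfolding incl_image_zero_def by blast

lemma nonzero_cech_class_detected:
  fixes F :: "'a::topological_space set" and \<gamma> :: "'a set set \<Rightarrow> ('a set list \<Rightarrow> 'g::field) set"
  assumes "\<gamma> \<in> cech_homology TYPE('g) F j" "\<not> cech_zero F j \<gamma>"
  obtains \<W> and a :: "'a set list \<Rightarrow> 'g"
  where "open_cover F \<W>" "\<W> \<noteq> {}" "cobd \<W> j a = (\<lambda>_. 0)" "\<forall>c\<in>\<gamma> \<W>. kronecker a c \<noteq> 0"
proof -
  obtain \<W> where \<W>: "open_cover F \<W>" "\<gamma> \<W> \<noteq> boundaries \<W> j"
    using assms(2) unfolding cech_zero_def by blast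
  then obtain c0 where c0: "c0 \<in> cycles \<W> j" "\<gamma> \<W> = hclass \<W> j c0"
    using cech_homology_representative[OF assms(1)] by blast
  have c0_chain: "c0 \<in> chains \<W> j" using c0(1) by (simp add: cycles_def)
  have "c0 \<notin> boundaries \<W> j" using hclass_boundary[of c0 \<W> j] \<W>(2) c0(2) by auto
  then obtain a where a: "kronecker a c0 \<noteq> 0" "cobd \<W> j a = (\<lambda>_. 0)"
    using separating_cocycle c0_chain by blast
  have detects: "\<forall>c\<in>\<gamma> \<W>. kronecker a c \<noteq> 0"
  proof
    fix c assume "c \<in> \<gamma> \<W>"
    obtain b where b: "b \<in> boundaries \<W> j" "c = (\<lambda>\<sigma>. c0 \<sigma> + b \<sigma>)"
      using \<open>c \<in> \<gamma> \<W>\<close> c0(2) unfolding hclass_def by blast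
    then have "kronecker a c = kronecker a c0 + kronecker a b"
      using kronecker_add chainsD(1)[OF c0_chain] chainsD(1)[OF boundaries_chains] by blast
    then show "kronecker a c \<noteq> 0" using kronecker_cocycle_boundary[OF a(2) b(1)] a(1) by simp
  qed
  have "\<W> \<noteq> {}"
  proof
    assume "\<W> = {}"
    then have "nerve_simp \<W> j = {}" by (auto simp: nerve_simp_def)
    then have "c0 = (\<lambda>_. 0)" using chainsD(2)[OF c0_chain] by auto
    then show False using a(1) by (simp add: kronecker_def)
  qed
  then show ?thesis by (rule that[OF \<W>(1) _ a(2) detects])
qed

section \<open>Covers of a space and of a closed subset\<close>

lemma open_cover_extend:
  assumes "closed F" "F \<subseteq> X" "open_cover F \<W>" "\<W> \<noteq> {}"
  obtains \<U> Q where "open_cover X \<U>" "\<forall>U\<in>\<U>. Q U \<in> \<W> \<and> U \<inter> F \<subseteq> Q U"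
proof -
  have "\<forall>W\<in>\<W>. \<exists>T. open T \<and> W = F \<inter> T"
    using assms(3) by (auto simp: open_cover_def openin_open)
  from bchoice[OF this] obtain Op where Op: "\<forall>W\<in>\<W>. open (Op W) \<and> W = F \<inter> Op W"
    by blast
  define \<U> where "\<U> = (\<lambda>W. X \<inter> Op W) ` \<W> \<union> {X - F}"
  have "U \<inter> F \<subseteq> W" if "W \<in> \<W>" "U = X \<inter> Op W" for U W
    using Op that by blast
  then have \<U>_cases: "(\<exists>W\<in>\<W>. U = X \<inter> Op W \<and> U \<inter> F \<subseteq> W) \<or> U = X - F" if "U \<in> \<U>" for U
    using that unfolding \<U>_def by blast
  have "open_cover X \<U>"
    unfolding open_cover_def
  proof (intro conjI ballI)
    show "finite \<U>" using assms(3) by (simp add: \<U>_def open_cover_def)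
    show "\<Union>\<U> = X"
    proof
      show "\<Union>\<U> \<subseteq> X" unfolding \<U>_def by blast
      show "X \<subseteq> \<Union>\<U>"
      proof
        fix x assume "x \<in> X"
        show "x \<in> \<Union>\<U>"
        proof (cases "x \<in> F")
          case True
          then obtain W where "W \<in> \<W>" "x \<in> W" using assms(3) unfolding open_cover_def by blast
          then have "x \<in> X \<inter> Op W" using Op \<open>x \<in> X\<close> by blast
          then show ?thesis unfolding \<U>_def using \<open>W \<in> \<W>\<close> by blast
        qed (use \<open>x \<in> X\<close> in \<open>auto simp: \<U>_def\<close>)
      qed
    qed
  next
    fix U assume "U \<in> \<U>"
    then show "openin (top_of_set X) U"
      using \<U>_cases Op assms(1) by (auto simp: openin_open_Int Diff_eq open_Compl)
  qed
  have "\<forall>U\<in>\<U>. \<exists>W. W \<in> \<W> \<and> U \<inter> F \<subseteq> W"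
    using \<U>_cases assms(4) by blast
  from bchoice[OF this] obtain Q where "\<forall>U\<in>\<U>. Q U \<in> \<W> \<and> U \<inter> F \<subseteq> Q U"
    by blast
  with \<open>open_cover X \<U>\<close> show ?thesis by (rule that)
qed

lemma open_cover_trace:
  assumes "open_cover X \<V>" "F \<subseteq> X"
  shows "open_cover F ((\<lambda>V. V \<inter> F) ` \<V>)"
  unfolding open_cover_def
proof (intro conjI ballI)
  show "finite ((\<lambda>V. V \<inter> F) ` \<V>)" using assms(1) by (simp add: open_cover_def)
  show "\<Union>((\<lambda>V. V \<inter> F) ` \<V>) = F" using assms by (auto simp: open_cover_def)
next
  fix V' assume "V' \<in> (\<lambda>V. V \<inter> F) ` \<V>"
  then obtain V where V: "V \<in> \<V>" "V' = V \<inter> F" by blast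
  then obtain T where "open T" "V = X \<inter> T"
    using assms(1) unfolding open_cover_def openin_open by blast
  moreover have "V' = F \<inter> T" using V(2) \<open>V = X \<inter> T\<close> assms(2) by blast
  ultimately show "openin (top_of_set F) V'" by (simp add: openin_open_Int)
qed

lemma is_proj_trace: "\<exists>s. is_proj ((\<lambda>V. V \<inter> F) ` \<V>) \<V> s"
proof -
  have "\<forall>V'\<in>(\<lambda>V. V \<inter> F) ` \<V>. \<exists>V. V \<in> \<V> \<and> V' \<subseteq> V" by blast
  from bchoice[OF this] show ?thesis unfolding is_proj_def .
qed

lemma is_proj_trace_comp:
  assumes Q: "\<forall>U\<in>\<U>. Q U \<in> \<W> \<and> U \<inter> F \<subseteq> Q U"
    and p: "is_proj \<V> \<U> p" and s: "is_proj ((\<lambda>V. V \<inter> F) ` \<V>) \<V> s"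
  shows "is_proj ((\<lambda>V. V \<inter> F) ` \<V>) \<W> (Q \<circ> p \<circ> s)"
  unfolding is_proj_def
proof
  fix V' assume "V' \<in> (\<lambda>V. V \<inter> F) ` \<V>"
  then have "s V' \<in> \<V>" "V' \<subseteq> s V'" "V' \<subseteq> F" using s unfolding is_proj_def by auto
  then have "p (s V') \<in> \<U>" "V' \<subseteq> p (s V') \<inter> F" using p unfolding is_proj_def by auto
  then show "(Q \<circ> p \<circ> s) V' \<in> \<W> \<and> V' \<subseteq> (Q \<circ> p \<circ> s) V'" using Q by auto
qed

section \<open>The connecting cocycle\<close>

text \<open>The coboundary of the transported cochain represents the image of \<open>[a]\<close> under the
  connecting homomorphism \<open>H\<^sup>k(F) \<rightarrow> H\<^sup>k\<^sup>+\<^sup>1(X, F)\<close>.\<close>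
definition transport_cochain ::
    "'a set set \<Rightarrow> 'a set \<Rightarrow> ('a set \<Rightarrow> 'a set) \<Rightarrow> nat \<Rightarrow> ('a set list \<Rightarrow> 'g) \<Rightarrow> 'a set list \<Rightarrow> 'g::zero"
  where "transport_cochain \<U> F Q k a \<tau> =
    (if \<tau> \<in> nerve_simp \<U> k \<and> \<Inter>(set \<tau>) \<inter> F \<noteq> {} then a (map Q \<tau>) else 0)"

lemma nerve_simp_map_meeting:
  assumes Q: "\<forall>U\<in>\<U>. Q U \<in> \<W> \<and> U \<inter> F \<subseteq> Q U"
    and \<sigma>: "\<sigma> \<in> nerve_simp \<U> k" "\<Inter>(set \<sigma>) \<inter> F \<noteq> {}"
  shows "map Q \<sigma> \<in> nerve_simp \<W> k"
proof -
  have "set \<sigma> \<subseteq> \<U>" using \<sigma>(1) by (simp add: nerve_simp_def)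
  have "\<Inter>(set \<sigma>) \<inter> F \<subseteq> \<Inter>(set (map Q \<sigma>))"
  proof
    fix x assume x: "x \<in> \<Inter>(set \<sigma>) \<inter> F"
    show "x \<in> \<Inter>(set (map Q \<sigma>))"
    proof
      fix W assume "W \<in> set (map Q \<sigma>)"
      then obtain U where "U \<in> set \<sigma>" "W = Q U" by auto
      then show "x \<in> W" using Q \<open>set \<sigma> \<subseteq> \<U>\<close> x by blast
    qed
  qed
  moreover have "set (map Q \<sigma>) \<subseteq> \<W>" using Q \<open>set \<sigma> \<subseteq> \<U>\<close> by auto
  ultimately show ?thesis using \<sigma> unfolding nerve_simp_def by auto
qed

lemma cobd_transport_cochain:
  assumes Q: "\<forall>U\<in>\<U>. Q U \<in> \<W> \<and> U \<inter> F \<subseteq> Q U"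
    and \<sigma>: "\<sigma> \<in> nerve_simp \<U> (Suc k)" "\<Inter>(set \<sigma>) \<inter> F \<noteq> {}"
  shows "cobd \<U> k (transport_cochain \<U> F Q k a) \<sigma> = cobd \<W> k a (map Q \<sigma>)"
proof -
  have "transport_cochain \<U> F Q k a (del_nth i \<sigma>) = a (del_nth i (map Q \<sigma>))"
    if "i < Suc (Suc k)" for i
  proof -
    have "\<Inter>(set \<sigma>) \<subseteq> \<Inter>(set (del_nth i \<sigma>))"
      by (rule Inter_anti_mono[OF set_del_nth_subset])
    then have "\<Inter>(set (del_nth i \<sigma>)) \<inter> F \<noteq> {}" using \<sigma>(2) by blast
    then show ?thesis using nerve_simp_del_nth[OF \<sigma>(1) that]
      by (simp add: transport_cochain_def map_del_nth)
  qed
  then show ?thesis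
    using \<sigma>(1) nerve_simp_map_meeting[OF Q \<sigma>] by (simp add: cobd_def)
qed

lemma cobd_transport_cochain_relative_cocycle:
  assumes Q: "\<forall>U\<in>\<U>. Q U \<in> \<W> \<and> U \<inter> F \<subseteq> Q U"
    and a: "cobd \<W> k a = (\<lambda>_. 0)"
  shows "cobd \<U> k (transport_cochain \<U> F Q k a) \<in> cocycles \<U> F (Suc k)"
  unfolding cocycles_def cochains_def
proof (intro CollectI conjI allI impI)
  fix \<sigma> assume nonzero: "cobd \<U> k (transport_cochain \<U> F Q k a) \<sigma> \<noteq> 0"
  then have \<sigma>: "\<sigma> \<in> nerve_simp \<U> (Suc k)" by (auto simp: cobd_def split: if_splits)
  moreover have "\<Inter>(set \<sigma>) \<inter> F = {}"
  proof (rule ccontr)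
    assume "\<Inter>(set \<sigma>) \<inter> F \<noteq> {}"
    then have "cobd \<U> k (transport_cochain \<U> F Q k a) \<sigma> = cobd \<W> k a (map Q \<sigma>)"
      by (rule cobd_transport_cochain[OF Q \<sigma>])
    with nonzero a show False by simp
  qed
  ultimately show "\<sigma> \<in> rel_simp \<U> F (Suc k)" by (simp add: rel_simp_def)
qed (rule cobd_cobd)

lemma pull_transport_cochain_trace:
  assumes Q: "\<forall>U\<in>\<U>. Q U \<in> \<W> \<and> U \<inter> F \<subseteq> Q U"
    and p: "is_proj \<V> \<U> p" and s: "is_proj ((\<lambda>V. V \<inter> F) ` \<V>) \<V> s"
    and g: "g \<in> cochains \<V> F k"
    and \<sigma>: "\<sigma> \<in> nerve_simp ((\<lambda>V. V \<inter> F) ` \<V>) k"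
  shows "pull \<V> k p (transport_cochain \<U> F Q k a) (map s \<sigma>) - g (map s \<sigma>) = a (map (Q \<circ> p \<circ> s) \<sigma>)"
proof -
  have s\<sigma>: "map s \<sigma> \<in> nerve_simp \<V> k" "\<Inter>(set \<sigma>) \<subseteq> \<Inter>(set (map s \<sigma>))"
    using nerve_simp_map[OF s \<sigma>] by auto
  have ps\<sigma>: "map p (map s \<sigma>) \<in> nerve_simp \<U> k" "\<Inter>(set (map s \<sigma>)) \<subseteq> \<Inter>(set (map p (map s \<sigma>)))"
    using nerve_simp_map[OF p s\<sigma>(1)] by auto
  obtain V where "V \<in> set \<sigma>" using \<sigma> by (cases \<sigma>) (auto simp: nerve_simp_def)
  moreover have "set \<sigma> \<subseteq> (\<lambda>V. V \<inter> F) ` \<V>" "\<Inter>(set \<sigma>) \<noteq> {}"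
    using \<sigma> by (auto simp: nerve_simp_def)
  ultimately have "\<Inter>(set \<sigma>) \<inter> F \<noteq> {}" by blast
  then have meets: "\<Inter>(set (map s \<sigma>)) \<inter> F \<noteq> {}" "\<Inter>(set (map p (map s \<sigma>))) \<inter> F \<noteq> {}"
    using s\<sigma>(2) ps\<sigma>(2) by blast+
  then have "g (map s \<sigma>) = 0"
    using g unfolding cochains_def rel_simp_def by blast
  then show ?thesis
    using s\<sigma>(1) ps\<sigma>(1) meets by (simp add: pull_def transport_cochain_def comp_assoc)
qed

lemma connecting_cocycle_not_coboundary:
  assumes \<gamma>: "\<gamma> \<in> cech_homology TYPE('g::field) F j" "incl_image_zero F X j \<gamma>"
    and \<W>: "open_cover F \<W>" "\<forall>c\<in>\<gamma> \<W>. kronecker a c \<noteq> 0"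
    and Q: "\<forall>U\<in>\<U>. Q U \<in> \<W> \<and> U \<inter> F \<subseteq> Q U"
    and "F \<subseteq> X" "open_cover X \<V>" and p: "is_proj \<V> \<U> p"
  shows "\<not> is_cobd \<V> F (Suc j) (pull \<V> (Suc j) p (cobd \<U> j (transport_cochain \<U> F Q j a)))"
proof
  let ?\<beta> = "transport_cochain \<U> F Q j a"
  let ?\<V>F = "(\<lambda>V. V \<inter> F) ` \<V>"
  assume "is_cobd \<V> F (Suc j) (pull \<V> (Suc j) p (cobd \<U> j ?\<beta>))"
  then obtain g where g: "g \<in> cochains \<V> F j" "pull \<V> (Suc j) p (cobd \<U> j ?\<beta>) = cobd \<V> j g"
    by (auto simp: is_cobd_def)
  define h where "h \<tau> = pull \<V> j p ?\<beta> \<tau> - g \<tau>" for \<tau>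
  have h_cocycle: "cobd \<V> j h = (\<lambda>_. 0)"
    unfolding h_def cobd_diff cobd_pull[OF p] g(2) by simp
  have \<V>F: "open_cover F ?\<V>F" using open_cover_trace \<open>open_cover X \<V>\<close> \<open>F \<subseteq> X\<close> .
  obtain s where s: "is_proj ?\<V>F \<V> s" using is_proj_trace by blast
  have r: "is_proj ?\<V>F \<W> (Q \<circ> p \<circ> s)" by (rule is_proj_trace_comp[OF Q p s])
  obtain c where c: "c \<in> cycles ?\<V>F j" "\<gamma> ?\<V>F = hclass ?\<V>F j c"
    using cech_homology_representative[OF \<gamma>(1) \<V>F] by blast
  have c_chain: "c \<in> chains ?\<V>F j" using c(1) by (simp add: cycles_def)
  have "c \<in> \<gamma> ?\<V>F" using c(2) hclass_self by blast
  then have "push s c \<in> boundaries \<V> j"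
    by (rule incl_image_zeroD[OF \<gamma>(2) \<open>open_cover X \<V>\<close> s])
  then have "0 = kronecker h (push s c)"
    using kronecker_cocycle_boundary[OF h_cocycle] by simp
  also have "\<dots> = kronecker (\<lambda>\<sigma>. h (map s \<sigma>)) c"
    by (rule kronecker_push[OF chainsD(1)[OF c_chain]])
  also have "\<dots> = kronecker (\<lambda>\<sigma>. a (map (Q \<circ> p \<circ> s) \<sigma>)) c"
    using pull_transport_cochain_trace[OF Q p s g(1)] chainsD(2)[OF c_chain]
    by (intro kronecker_cong) (simp add: h_def)
  also have "\<dots> = kronecker a (push (Q \<circ> p \<circ> s) c)"
    by (rule kronecker_push[OF chainsD(1)[OF c_chain], symmetric])
  finally have "kronecker a (push (Q \<circ> p \<circ> s) c) = 0" ..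
  moreover have "push (Q \<circ> p \<circ> s) c \<in> \<gamma> \<W>"
    by (rule cech_homology_push[OF \<gamma>(1) \<W>(1) \<V>F r \<open>c \<in> \<gamma> ?\<V>F\<close>])
  ultimately show False using \<W>(2) by blast
qed

theorem proposition2p1:
  fixes X :: "'a::metric_space set"
  assumes "compact X"
  shows "\<forall>k \<in> hom_dim_set TYPE('g::field) X.
           \<exists>n \<ge> k. \<exists>A. closed A \<and> A \<subseteq> X \<and> cech_cohom_nonzero TYPE('g) X A n"
proof
  fix k assume "k \<in> hom_dim_set TYPE('g) X"
  then obtain F and \<gamma> :: "'a set set \<Rightarrow> ('a set list \<Rightarrow> 'g) set" where
    "k \<ge> 1" and F: "closed F" "F \<subseteq> X"
    and \<gamma>: "\<gamma> \<in> cech_homology TYPE('g) F (k - 1)" "\<not> cech_zero F (k - 1) \<gamma>"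
      "incl_image_zero F X (k - 1) \<gamma>"
    unfolding hom_dim_set_def by blast
  then obtain j where k: "k = Suc j" by (cases k) auto
  note \<gamma> = \<gamma>[unfolded k diff_Suc_1]
  obtain \<W> and a :: "'a set list \<Rightarrow> 'g" where \<W>: "open_cover F \<W>" "\<W> \<noteq> {}"
    and a: "cobd \<W> j a = (\<lambda>_. 0)" "\<forall>c\<in>\<gamma> \<W>. kronecker a c \<noteq> 0"
    by (rule nonzero_cech_class_detected[OF \<gamma>(1,2)])
  obtain \<U> Q where \<U>: "open_cover X \<U>" and Q: "\<forall>U\<in>\<U>. Q U \<in> \<W> \<and> U \<inter> F \<subseteq> Q U"
    by (rule open_cover_extend[OF F \<W>])
  have "cech_cohom_nonzero TYPE('g) X F k"
    unfolding cech_cohom_nonzero_def k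
    using \<U> cobd_transport_cochain_relative_cocycle[OF Q a(1)]
      connecting_cocycle_not_coboundary[OF \<gamma>(1,3) \<W>(1) a(2) Q F(2)] by blast
  then show "\<exists>n \<ge> k. \<exists>A. closed A \<and> A \<subseteq> X \<and> cech_cohom_nonzero TYPE('g) X A n"
    using F by blast
qed

end
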